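(* The stabilizer of $(1,0,0,0)$ in the group $\langle H^\infty,\iota\rangle$ is $\langle H^\infty[3],\iota\rangle$, where $H^\infty[3]$ acts on $\mathbb{R}^4$ fixing the first coordinate.
   Context: Let $\tau=(1+\sqrt5)/2$, $\tau'=(1-\sqrt5)/2$. Let $\Delta\subset\mathbb{R}^4$ be the set of 120 vectors consisting of: the 8 vectors obtained from $(\pm1,0,0,0)$ by permuting coordinates; the 16 vectors $\frac12(\pm1,\pm1,\pm1,\pm1)$; and the 96 vectors obtained from $\frac12(0,\pm1,\pm\tau',\pm\tau)$ (all sign choices) by even permutations of the coordinates; $\Delta'$ is its image under $\tau\leftrightarrow\tau'$ in each coordinate. For a unit vector $a$, $r_a(x)=x-2(x\cdot a)a$; $H^\infty$ is the group generated by $r_a$, $a\in\Delta\cup\Delta'$. Let $V=\{x\in\mathbb{R}^4:x_1=0\}$, $\Delta[3]=\Delta\cap V$, $\Delta[3]'=\Delta'\cap V$, and $H^\infty[3]$ the group generated by $r_a$, $a\in\Delta[3]\cup\Delta[3]'$. Let $\iota$ be the linear map $(x_1,x_2,x_3,x_4)\mapsto(x_1,x_2,x_4,x_3)$. *)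

theory Defs
  imports "HOL-Analysis.Analysis" "HOL-Combinatorics.Permutations"
begin

definition tau :: real where "tau = (1 + sqrt 5) / 2"
definition tau' :: real where "tau' = (1 - sqrt 5) / 2"

text \<open>The 120 vectors, parametrised by the pair (t, t'); Delta tau tau' is the set
  in the paper and Delta tau' tau is its image under the swap tau <-> tau'.\<close>
definition Delta :: "real \<Rightarrow> real \<Rightarrow> (real^4) set" where
  "Delta t t' =
     {v. \<exists>i. \<exists>s\<in>{-1,1::real}. v = s *\<^sub>R axis i 1}
   \<union> {v. \<exists>s1\<in>{-1,1::real}. \<exists>s2\<in>{-1,1::real}. \<exists>s3\<in>{-1,1::real}. \<exists>s4\<in>{-1,1::real}.
          v = vector [s1/2, s2/2, s3/2, s4/2]}
   \<union> {v. \<exists>s1\<in>{-1,1::real}. \<exists>s2\<in>{-1,1::real}. \<exists>s3\<in>{-1,1::real}. \<exists>p.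
          p permutes (UNIV :: 4 set) \<and> evenperm p \<and>
          v = (\<chi> i. (vector [0, s1/2, s2*t'/2, s3*t/2] :: real^4) $ p i)}"

definition DeltaP :: "(real^4) set" where "DeltaP = Delta tau tau'"
definition DeltaP' :: "(real^4) set" where "DeltaP' = Delta tau' tau"

definition refl_map :: "real^4 \<Rightarrow> real^4 \<Rightarrow> real^4" where
  "refl_map a x = x - (2 * (x \<bullet> a)) *\<^sub>R a"

definition Vsub :: "(real^4) set" where "Vsub = {x. x $ 1 = 0}"

definition iota :: "real^4 \<Rightarrow> real^4" where
  "iota x = vector [x $ 1, x $ 2, x $ 4, x $ 3]"

inductive_set gen_group :: "('a \<Rightarrow> 'a) set \<Rightarrow> ('a \<Rightarrow> 'a) set" for S where
  gen_id: "id \<in> gen_group S"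
| gen_gen: "f \<in> S \<Longrightarrow> f \<in> gen_group S"
| gen_comp: "f \<in> gen_group S \<Longrightarrow> g \<in> gen_group S \<Longrightarrow> f \<circ> g \<in> gen_group S"
| gen_inv: "f \<in> gen_group S \<Longrightarrow> inv f \<in> gen_group S"

definition Hinf :: "(real^4 \<Rightarrow> real^4) set" where
  "Hinf = gen_group (refl_map ` (DeltaP \<union> DeltaP'))"

definition Hinf3 :: "(real^4 \<Rightarrow> real^4) set" where
  "Hinf3 = gen_group (refl_map ` ((DeltaP \<inter> Vsub) \<union> (DeltaP' \<inter> Vsub)))"

end

theory Submission
  imports Defs
begin

(* Identify R^4 with the quaternions, so that r_a x = - a conj(x) a for a unit vector a, and
   iota is an anti-automorphism fixing 1. Let W (rot_units) be the unit quaternions u whose inner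
   automorphism x |-> u x conj(u) lies in <H^inf[3], iota>. W is a group, stable under iota; it
   contains the pure roots, and it is closed under signed permutations of the coordinates
   (conjugation by i, j, k changes signs, left multiplication by i and conjugation by
   omega = (1+i+j+k)/2 permute coordinates). As every root is a signed permutation of 1, of
   omega or of a pure root, W contains all roots. Every generator g of <H^inf, iota> satisfies
   g o L_w = L_w' o k with w' in W and k in <H^inf[3], iota>, so every element of <H^inf, iota> has
   the form L_w o k. Since k fixes 1, such an element fixes 1 only if w = 1. *)

lemma vector_4_nth [simp]:
  "(vector [x, y, z, w] :: ('a::zero)^4) $ 1 = x"
  "(vector [x, y, z, w] :: ('a::zero)^4) $ 2 = y"
  "(vector [x, y, z, w] :: ('a::zero)^4) $ 3 = z"
  "(vector [x, y, z, w] :: ('a::zero)^4) $ 4 = w"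
  unfolding vector_def by simp_all

section \<open>Quaternion arithmetic on \<open>real^4\<close>\<close>

abbreviation qone :: "real^4" where
  "qone \<equiv> axis 1 1"

lemma qone_nth [simp]: "qone $ 1 = 1" "qone $ 2 = 0" "qone $ 3 = 0" "qone $ 4 = 0"
  by (simp_all add: axis_def)

definition qmul :: "real^4 \<Rightarrow> real^4 \<Rightarrow> real^4" where
  "qmul x y = vector [x$1*y$1 - x$2*y$2 - x$3*y$3 - x$4*y$4,
                      x$1*y$2 + x$2*y$1 + x$3*y$4 - x$4*y$3,
                      x$1*y$3 - x$2*y$4 + x$3*y$1 + x$4*y$2,
                      x$1*y$4 + x$2*y$3 - x$3*y$2 + x$4*y$1]"

definition qcnj :: "real^4 \<Rightarrow> real^4" where
  "qcnj x = vector [x$1, -x$2, -x$3, -x$4]"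

lemmas quaternion_coords =
  vec_eq_iff forall_4 qmul_def qcnj_def inner_vec_def sum_4 iota_def refl_map_def

lemma qmul_assoc: "qmul (qmul x y) z = qmul x (qmul y z)"
  by (simp add: quaternion_coords algebra_simps)

lemma qcnj_qmul: "qcnj (qmul x y) = qmul (qcnj y) (qcnj x)"
  by (simp add: quaternion_coords algebra_simps)

lemma qcnj_qcnj [simp]: "qcnj (qcnj x) = x"
  by (simp add: quaternion_coords)

lemma qcnj_one [simp]: "qcnj qone = qone"
  by (simp add: quaternion_coords)

lemma qmul_qcnj_right: "qmul x (qcnj x) = (x \<bullet> x) *\<^sub>R qone"
  by (simp add: quaternion_coords algebra_simps power2_eq_square)

lemma qmul_qcnj_left: "qmul (qcnj x) x = (x \<bullet> x) *\<^sub>R qone"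
  by (simp add: quaternion_coords algebra_simps power2_eq_square)

lemma qmul_one [simp]: "qmul qone x = x" "qmul x qone = x"
  by (simp_all add: quaternion_coords)

lemma qmul_scaleR [simp]:
  "qmul (c *\<^sub>R x) y = c *\<^sub>R qmul x y" "qmul x (c *\<^sub>R y) = c *\<^sub>R qmul x y"
  by (simp_all add: quaternion_coords algebra_simps)

lemma qmul_uminus [simp]:
  "qmul (- x) y = - qmul x y" "qmul x (- y) = - qmul x y" "qcnj (- x) = - qcnj x"
  by (simp_all add: quaternion_coords algebra_simps)

lemma inner_qcnj: "qcnj x \<bullet> qcnj x = x \<bullet> x"
  by (simp add: quaternion_coords)

lemma inner_qmul: "qmul x y \<bullet> qmul x y = (x \<bullet> x) * (y \<bullet> y)"
proof -
  have "(qmul x y \<bullet> qmul x y) *\<^sub>R qone = qmul (qmul x y) (qcnj (qmul x y))"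
    by (simp add: qmul_qcnj_right)
  also have "\<dots> = qmul x (qmul (qmul y (qcnj y)) (qcnj x))"
    by (simp add: qcnj_qmul qmul_assoc)
  also have "\<dots> = ((x \<bullet> x) * (y \<bullet> y)) *\<^sub>R qone"
    by (simp add: qmul_qcnj_right)
  finally have "((qmul x y \<bullet> qmul x y) *\<^sub>R qone) $ 1 = (((x \<bullet> x) * (y \<bullet> y)) *\<^sub>R qone) $ 1"
    by (rule arg_cong[where f = "\<lambda>v. v $ 1"])
  then show ?thesis
    by simp
qed

lemma qmul_qcnj_cancel:
  assumes "y \<bullet> y = 1"
  shows "qmul (qmul x y) (qcnj y) = x" "qmul (qmul x (qcnj y)) y = x"
  using assms by (simp_all add: qmul_assoc qmul_qcnj_right qmul_qcnj_left)

lemma qmul_qcnj_sandwich: "qmul (qmul a (qcnj x)) a = (2 * (x \<bullet> a)) *\<^sub>R a - (a \<bullet> a) *\<^sub>R x"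
  by (simp add: quaternion_coords algebra_simps)

lemma refl_map_qmul: "a \<bullet> a = 1 \<Longrightarrow> refl_map a x = - qmul (qmul a (qcnj x)) a"
  by (simp add: qmul_qcnj_sandwich refl_map_def)

lemma refl_map_refl_map: "a \<bullet> a = 1 \<Longrightarrow> refl_map a (refl_map a x) = x"
  by (simp add: refl_map_def inner_diff_left algebra_simps)

lemma iota_qmul: "iota (qmul x y) = qmul (iota y) (iota x)"
  by (simp add: quaternion_coords algebra_simps)

lemma iota_qcnj: "iota (qcnj x) = qcnj (iota x)"
  by (simp add: quaternion_coords)

lemma iota_iota [simp]: "iota (iota x) = x"
  by (simp add: quaternion_coords)

lemma iota_one [simp]: "iota qone = qone"
  by (simp add: quaternion_coords)

lemma inner_iota: "iota x \<bullet> iota x = x \<bullet> x"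
  by (simp add: quaternion_coords)

definition qrot :: "real^4 \<Rightarrow> real^4 \<Rightarrow> real^4" where
  "qrot u x = qmul (qmul u x) (qcnj u)"

lemma qrot_qmul: "qrot (qmul u v) = qrot u \<circ> qrot v"
  by (simp add: fun_eq_iff qrot_def qcnj_qmul qmul_assoc)

lemma qrot_uminus: "qrot (- u) = qrot u"
  by (simp add: fun_eq_iff qrot_def)

lemma qrot_one: "qrot qone = id"
  by (simp add: fun_eq_iff qrot_def)

lemma inv_qrot: "u \<bullet> u = 1 \<Longrightarrow> inv (qrot u) = qrot (qcnj u)"
proof (rule inv_unique_comp)
  assume "u \<bullet> u = 1"
  then show "qrot u \<circ> qrot (qcnj u) = id" "qrot (qcnj u) \<circ> qrot u = id"
    by (simp_all flip: qrot_qmul add: qmul_qcnj_left qmul_qcnj_right qrot_one)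
qed

lemma iota_qrot_iota: "iota \<circ> qrot u \<circ> iota = qrot (qcnj (iota u))"
  by (simp add: fun_eq_iff qrot_def iota_qmul iota_qcnj qmul_assoc)

lemma qcnj_eq_refl_maps:
  "qcnj = refl_map (axis 2 1) \<circ> refl_map (axis 3 1) \<circ> refl_map (axis 4 1)"
  by (simp add: fun_eq_iff quaternion_coords axis_def)

section \<open>Generated groups\<close>

inductive_set gen_monoid :: "('a \<Rightarrow> 'a) set \<Rightarrow> ('a \<Rightarrow> 'a) set" for S where
  gen_monoid_id: "id \<in> gen_monoid S"
| gen_monoid_step: "s \<in> S \<Longrightarrow> m \<in> gen_monoid S \<Longrightarrow> s \<circ> m \<in> gen_monoid S"

lemma gen_monoid_comp: "m \<in> gen_monoid S \<Longrightarrow> m' \<in> gen_monoid S \<Longrightarrow> m \<circ> m' \<in> gen_monoid S"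
  by (induction m rule: gen_monoid.induct) (auto simp: comp_assoc intro: gen_monoid_step)

lemma gen_monoid_generator: "s \<in> S \<Longrightarrow> s \<in> gen_monoid S"
  using gen_monoid_step[OF _ gen_monoid_id] by simp

lemma gen_monoid_inv:
  assumes "\<And>s. s \<in> S \<Longrightarrow> s \<circ> s = id" and "m \<in> gen_monoid S"
  shows "bij m \<and> inv m \<in> gen_monoid S"
  using assms(2)
proof (induction m rule: gen_monoid.induct)
  case gen_monoid_id
  then show ?case by (simp only: bij_id inv_id gen_monoid.gen_monoid_id simp_thms)
next
  case (gen_monoid_step s m)
  have "s \<circ> s = id" using assms(1) gen_monoid_step(1) by blast
  then have "bij s" "inv s = s" by (auto intro: o_bij inv_unique_comp)
  then have "bij (s \<circ> m)" "inv (s \<circ> m) = inv m \<circ> s"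
    using gen_monoid_step(3) by (auto simp: bij_comp o_inv_distrib)
  then show ?case
    using gen_monoid_step gen_monoid_comp gen_monoid_generator by metis
qed

lemma gen_group_subset_gen_monoid:
  assumes "\<And>s. s \<in> S \<Longrightarrow> s \<circ> s = id"
  shows "gen_group S \<subseteq> gen_monoid S"
proof
  fix f assume "f \<in> gen_group S"
  then show "f \<in> gen_monoid S"
  proof (induction f rule: gen_group.induct)
    case (gen_inv f)
    then show ?case using gen_monoid_inv[OF assms] by blast
  qed (blast intro: gen_monoid_id gen_monoid_generator gen_monoid_comp)+
qed

lemma gen_group_involutions_induct [consumes 2, case_names id step]:
  assumes "f \<in> gen_group S" and "\<forall>s \<in> S. s \<circ> s = id"
    and "P id" and "\<And>s m. s \<in> S \<Longrightarrow> P m \<Longrightarrow> P (s \<circ> m)"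
  shows "P f"
proof -
  have "f \<in> gen_monoid S"
    using assms(1,2) gen_group_subset_gen_monoid by blast
  then show ?thesis
    by (induction f rule: gen_monoid.induct) (blast intro: assms(3,4))+
qed

lemma gen_group_mono: "S \<subseteq> T \<Longrightarrow> gen_group S \<subseteq> gen_group T"
proof
  fix f assume "f \<in> gen_group S" "S \<subseteq> T"
  then show "f \<in> gen_group T"
    by (induction f rule: gen_group.induct) (auto intro: gen_group.intros)
qed

lemma gen_group_gen_group_Un: "gen_group (gen_group R \<union> T) \<subseteq> gen_group (R \<union> T)"
proof
  fix f assume "f \<in> gen_group (gen_group R \<union> T)"
  then show "f \<in> gen_group (R \<union> T)"
  proof (induction f rule: gen_group.induct)
    case (gen_gen f)
    then show ?case
      using gen_group_mono[of R "R \<union> T"] by (auto intro: gen_group.gen_gen)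
  qed (blast intro: gen_group.intros)+
qed

lemma gen_group_fixes:
  assumes "\<And>s. s \<in> S \<Longrightarrow> bij s \<and> s x = x" and "f \<in> gen_group S"
  shows "bij f \<and> f x = x"
  using assms(2)
proof (induction f rule: gen_group.induct)
  case gen_id
  show ?case by (rule conjI[OF bij_id]) simp
next
  case (gen_gen f)
  then show ?case by (rule assms(1))
next
  case (gen_comp f g)
  then show ?case by (metis bij_comp comp_apply)
next
  case (gen_inv f)
  then show ?case by (simp add: bij_imp_bij_inv bij_is_inj inv_f_eq)
qed

section \<open>The roots and the group generated by the pure roots\<close>

definition golden_pair :: "real \<Rightarrow> real \<Rightarrow> bool" where
  "golden_pair t t' \<longleftrightarrow> (t = tau \<and> t' = tau') \<or> (t = tau' \<and> t' = tau)"

lemma golden_pair_tau: "golden_pair tau tau'"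
  by (simp add: golden_pair_def)

lemma golden_pair_eqs:
  assumes "golden_pair t t'"
  shows "t' = 1 - t" "t * t = t + 1"
proof -
  have sum: "tau + tau' = 1"
    by (simp add: tau_def tau'_def field_simps)
  have "(1 + sqrt 5) * (1 - sqrt 5) = -4"
    by (simp add: algebra_simps)
  then have prod: "tau * tau' = -1"
    by (simp add: tau_def tau'_def)
  show t': "t' = 1 - t"
    using assms sum by (auto simp: golden_pair_def)
  have "t * t' = -1"
    using assms prod by (auto simp: golden_pair_def algebra_simps)
  then show "t * t = t + 1"
    unfolding t' by (simp add: algebra_simps)
qed

abbreviation Roots :: "(real^4) set" where
  "Roots \<equiv> DeltaP \<union> DeltaP'"

abbreviation Roots3 :: "(real^4) set" where
  "Roots3 \<equiv> DeltaP \<inter> Vsub \<union> DeltaP' \<inter> Vsub"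

lemma Roots_cases: "a \<in> Roots \<Longrightarrow> \<exists>t t'. golden_pair t t' \<and> a \<in> Delta t t'"
  by (auto simp: golden_pair_def DeltaP_def DeltaP'_def)

lemma Delta_cases [consumes 1, case_names axis half golden]:
  assumes "a \<in> Delta t t'"
  obtains (axis) i s where "s \<in> {-1, 1}" "a = s *\<^sub>R axis i 1"
    | (half) s1 s2 s3 s4 where "s1 \<in> {-1, 1}" "s2 \<in> {-1, 1}" "s3 \<in> {-1, 1}" "s4 \<in> {-1, 1}"
        "a = vector [s1/2, s2/2, s3/2, s4/2]"
    | (golden) s1 s2 s3 p where "s1 \<in> {-1, 1}" "s2 \<in> {-1, 1}" "s3 \<in> {-1, 1}" "p permutes UNIV"
        "a = (\<chi> i. (vector [0, s1/2, s2*t'/2, s3*t/2] :: real^4) $ p i)"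
  using assms unfolding Delta_def Un_iff mem_Collect_eq
  by (elim disjE exE bexE conjE) (rule that; assumption)+

lemma Delta_subset_Roots: "golden_pair t t' \<Longrightarrow> Delta t t' \<subseteq> Roots"
  by (auto simp: golden_pair_def DeltaP_def DeltaP'_def)

lemma Roots3I: "a \<in> Roots \<Longrightarrow> a $ 1 = 0 \<Longrightarrow> a \<in> Roots3"
  by (auto simp: Vsub_def)

lemma Roots3D: "a \<in> Roots3 \<Longrightarrow> a \<in> Roots \<and> a $ 1 = 0"
  by (auto simp: Vsub_def)

lemma axis_in_DeltaP: "(axis k 1 :: real^4) \<in> DeltaP"
  unfolding DeltaP_def Delta_def
  by (intro UnI1 CollectI exI[where x = k] bexI[where x = 1]) simp_all

lemma golden_root_in_Delta: "(vector [0, 1/2, t'/2, t/2] :: real^4) \<in> Delta t t'"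
proof -
  have "(vector [0, 1/2, t'/2, t/2] :: real^4) = (\<chi> i. (vector [0, 1/2, 1 * t'/2, 1 * t/2] :: real^4) $ id i)"
    by (simp add: vec_eq_iff)
  then show ?thesis
    unfolding Delta_def
    by (intro UnI2 CollectI bexI[where x = 1] exI[where x = id]) (simp_all add: permutes_id)
qed

abbreviation Hinf3_iota :: "(real^4 \<Rightarrow> real^4) set" where
  "Hinf3_iota \<equiv> gen_group (Hinf3 \<union> {iota})"

lemma refl_map_in_Hinf3_iota: "a \<in> Roots3 \<Longrightarrow> refl_map a \<in> Hinf3_iota"
  unfolding Hinf3_def by (intro gen_gen UnI1) (blast intro: gen_gen)

lemma iota_in_Hinf3_iota: "iota \<in> Hinf3_iota"
  by (simp add: gen_gen)

lemma qcnj_in_Hinf3_iota: "qcnj \<in> Hinf3_iota"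
  unfolding qcnj_eq_refl_maps
  by (intro gen_comp refl_map_in_Hinf3_iota Roots3I UnI1 axis_in_DeltaP) (simp_all add: axis_def)

definition rot_units :: "(real^4) set" where
  "rot_units = {u. u \<bullet> u = 1 \<and> qrot u \<in> Hinf3_iota}"

lemma rot_units_unit: "u \<in> rot_units \<Longrightarrow> u \<bullet> u = 1"
  by (simp add: rot_units_def)

lemma rot_units_one: "qone \<in> rot_units"
  by (simp add: rot_units_def qrot_one gen_id)

lemma rot_units_qmul: "u \<in> rot_units \<Longrightarrow> v \<in> rot_units \<Longrightarrow> qmul u v \<in> rot_units"
  by (simp add: rot_units_def inner_qmul qrot_qmul gen_comp)

lemma rot_units_uminus: "u \<in> rot_units \<Longrightarrow> - u \<in> rot_units"
  by (simp add: rot_units_def qrot_uminus)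

lemma rot_units_qcnj: "u \<in> rot_units \<Longrightarrow> qcnj u \<in> rot_units"
  unfolding rot_units_def by (auto simp: inner_qcnj gen_inv simp flip: inv_qrot)

lemma rot_units_iota:
  assumes "u \<in> rot_units"
  shows "iota u \<in> rot_units"
proof -
  have "iota \<circ> qrot u \<circ> iota \<in> Hinf3_iota"
    using assms by (intro gen_comp iota_in_Hinf3_iota) (simp add: rot_units_def)
  then have "qcnj (iota u) \<in> rot_units"
    using assms by (simp add: rot_units_def iota_qrot_iota inner_qcnj inner_iota)
  then show ?thesis
    using rot_units_qcnj by fastforce
qed

lemma rot_units_qrot: "u \<in> rot_units \<Longrightarrow> v \<in> rot_units \<Longrightarrow> qrot u v \<in> rot_units"
  unfolding qrot_def by (intro rot_units_qmul rot_units_qcnj)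

lemma pure_root_in_rot_units:
  assumes "a \<in> Roots3" and "a \<bullet> a = 1"
  shows "a \<in> rot_units"
proof -
  have "a $ 1 = 0"
    using Roots3D[OF assms(1)] by blast
  then have cnj: "qcnj a = - a"
    by (simp add: quaternion_coords)
  have "qrot a = refl_map a \<circ> qcnj"
    by (simp add: fun_eq_iff qrot_def refl_map_qmul[OF assms(2)] cnj)
  moreover have "refl_map a \<circ> qcnj \<in> Hinf3_iota"
    by (intro gen_comp refl_map_in_Hinf3_iota assms(1) qcnj_in_Hinf3_iota)
  ultimately show ?thesis
    using assms(2) by (simp add: rot_units_def)
qed

lemma axis_in_rot_units:
  assumes "k \<noteq> 1"
  shows "axis k 1 \<in> rot_units"
proof (rule pure_root_in_rot_units)
  show "axis k 1 \<in> Roots3"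
    using assms by (intro Roots3I UnI1 axis_in_DeltaP) (simp add: axis_def)
qed (simp add: inner_axis_axis)

lemma golden_root_in_rot_units:
  assumes "golden_pair t t'"
  shows "vector [0, 1/2, t'/2, t/2] \<in> rot_units"
proof (rule pure_root_in_rot_units)
  show "vector [0, 1/2, t'/2, t/2] \<in> Roots3"
    using golden_root_in_Delta Delta_subset_Roots[OF assms] by (intro Roots3I) auto
  show "(vector [0, 1/2, t'/2, t/2] :: real^4) \<bullet> vector [0, 1/2, t'/2, t/2] = 1"
    unfolding golden_pair_eqs(1)[OF assms]
    using golden_pair_eqs(2)[OF assms] by (simp add: inner_vec_def sum_4 field_simps)
qed

section \<open>Signed coordinate permutations\<close>

lemma rot_units_flip:
  assumes "u \<in> rot_units"
  shows "(\<chi> i. (if i = j then -1 else 1) * u $ i) \<in> rot_units"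
proof -
  have "(\<chi> i. (if i = j then -1 else 1) * u $ i)
      = (if j = 1 then - qcnj u else qcnj (qrot (axis j 1) u))"
    using exhaust_4[of j] by (auto simp: quaternion_coords qrot_def axis_def)
  then show ?thesis
    by (auto intro: assms rot_units_uminus rot_units_qcnj rot_units_qrot axis_in_rot_units)
qed

lemma rot_units_signs:
  assumes "u \<in> rot_units" and "\<forall>i. s i \<in> {-1, 1}"
  shows "(\<chi> i. s i * u $ i) \<in> rot_units"
proof -
  define flip where
    "flip j v = (if s j = 1 then v else (\<chi> i. (if i = j then -1 else 1) * v $ i))" for j and v :: "real^4"
  have flip: "v \<in> rot_units \<Longrightarrow> flip j v \<in> rot_units" for j v
    by (simp add: flip_def rot_units_flip)
  have "(\<chi> i. s i * u $ i) = flip 1 (flip 2 (flip 3 (flip 4 u)))"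
    using assms(2) by (auto simp: flip_def vec_eq_iff forall_4)
  then show ?thesis
    using flip assms(1) by simp
qed

lemma rot_units_signs_vector:
  assumes "u \<in> rot_units" and "e1 \<in> {-1, 1}" "e2 \<in> {-1, 1}" "e3 \<in> {-1, 1}" "e4 \<in> {-1, 1}"
  shows "vector [e1 * u $ 1, e2 * u $ 2, e3 * u $ 3, e4 * u $ 4] \<in> rot_units"
proof -
  have "vector [e1 * u $ 1, e2 * u $ 2, e3 * u $ 3, e4 * u $ 4] = (\<chi> i. vector [e1, e2, e3, e4] $ i * u $ i)"
    by (simp add: vec_eq_iff forall_4)
  also have "\<dots> \<in> rot_units"
    using assms by (intro rot_units_signs) (auto simp: forall_4)
  finally show ?thesis .
qed

lemma omega_in_rot_units: "vector [1/2, 1/2, 1/2, 1/2] \<in> rot_units"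
proof -
  have b: "vector [0, 1/2, tau'/2, tau/2] \<in> rot_units"
    by (rule golden_root_in_rot_units[OF golden_pair_tau])
  have x: "vector [0, 1/2, tau'/2, - (tau/2)] \<in> rot_units"
    using rot_units_signs_vector[OF b, of 1 1 1 "-1"] by simp
  have y: "vector [0, 1/2, - (tau'/2), - (tau/2)] \<in> rot_units"
    using rot_units_signs_vector[OF b, of 1 1 "-1" "-1"] by simp
  have z: "vector [0, - (1/2), tau'/2, - (tau/2)] \<in> rot_units"
    using rot_units_signs_vector[OF b, of 1 "-1" 1 "-1"] by simp
  have "vector [1/2, 1/2, 1/2, 1/2]
      = qmul (qmul (vector [0, 1/2, tau'/2, - (tau/2)]) (vector [0, 1/2, - (tau'/2), - (tau/2)]))
          (vector [0, - (1/2), tau'/2, - (tau/2)])"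
    unfolding golden_pair_eqs(1)[OF golden_pair_tau]
    using golden_pair_eqs(2)[OF golden_pair_tau]
    by (simp add: quaternion_coords field_simps; algebra)
  then show ?thesis
    using x y z by (simp add: rot_units_qmul)
qed

definition signed_perm_closed :: "(4 \<Rightarrow> 4) \<Rightarrow> bool" where
  "signed_perm_closed p \<longleftrightarrow>
     (\<forall>u \<in> rot_units. \<forall>s. (\<forall>i. s i \<in> {-1, 1}) \<longrightarrow> (\<chi> i. s i * u $ p i) \<in> rot_units)"

lemma signed_perm_closedI:
  assumes "\<forall>i. s i \<in> {-1, 1}" and "\<And>u. u \<in> rot_units \<Longrightarrow> (\<chi> i. s i * u $ p i) \<in> rot_units"
  shows "signed_perm_closed p"
  unfolding signed_perm_closed_def
proof (intro ballI allI impI)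
  fix u and s' :: "4 \<Rightarrow> real" assume u: "u \<in> rot_units" and s': "\<forall>i. s' i \<in> {-1, 1}"
  have "(\<chi> i. (s' i * s i) * (\<chi> i. s i * u $ p i) $ i) \<in> rot_units"
  proof (intro rot_units_signs allI)
    fix i
    show "s' i * s i \<in> {-1, 1}"
      using assms(1)[rule_format, of i] s'[rule_format, of i] by auto
  qed (use assms u in auto)
  moreover have "(s' i * s i) * (s i * u $ p i) = s' i * u $ p i" for i
  proof -
    have "s i * s i = 1"
      using assms(1)[rule_format, of i] by auto
    then show ?thesis
      by (metis mult.assoc mult.right_neutral)
  qed
  then have "(\<chi> i. (s' i * s i) * (\<chi> i. s i * u $ p i) $ i) = (\<chi> i. s' i * u $ p i)"
    by (simp only: vec_lambda_beta)
  ultimately show "(\<chi> i. s' i * u $ p i) \<in> rot_units"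
    by simp
qed

lemma signed_perm_closedD:
  "signed_perm_closed p \<Longrightarrow> u \<in> rot_units \<Longrightarrow> \<forall>i. s i \<in> {-1, 1} \<Longrightarrow> (\<chi> i. s i * u $ p i) \<in> rot_units"
  by (simp add: signed_perm_closed_def)

lemma signed_perm_closed_unsigned:
  assumes "signed_perm_closed p" and "u \<in> rot_units"
  shows "(\<chi> i. u $ p i) \<in> rot_units"
  using signed_perm_closedD[OF assms, of "\<lambda>_. 1"] by simp

lemma signed_perm_closed_id: "signed_perm_closed id"
  by (rule signed_perm_closedI[where s = "\<lambda>_. 1"]) simp_all

lemma signed_perm_closed_comp:
  assumes "signed_perm_closed p" and "signed_perm_closed q"
  shows "signed_perm_closed (p \<circ> q)"
  unfolding signed_perm_closed_def
proof (intro ballI allI impI)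
  fix u and s :: "4 \<Rightarrow> real" assume u: "u \<in> rot_units" and s: "\<forall>i. s i \<in> {-1, 1}"
  have "(\<chi> i. u $ p i) \<in> rot_units"
    using signed_perm_closed_unsigned[OF assms(1) u] .
  then have "(\<chi> i. s i * (\<chi> i. u $ p i) $ q i) \<in> rot_units"
    using signed_perm_closedD[OF assms(2) _ s] by blast
  then show "(\<chi> i. s i * u $ (p \<circ> q) i) \<in> rot_units"
    by simp
qed

text \<open>Left multiplication by \<open>i\<close> swaps the coordinates 1, 2 and 3, 4 up to sign; \<open>\<iota>\<close> undoes
  the second swap.\<close>

lemma signed_perm_closed_transpose_12: "signed_perm_closed (Transposition.transpose 1 2)"
proof (rule signed_perm_closedI[where s = "\<lambda>i. if i = 1 \<or> i = 4 then -1 else 1"])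
  fix u assume "u \<in> rot_units"
  then have "iota (qmul (axis 2 1) u) \<in> rot_units"
    by (intro rot_units_iota rot_units_qmul axis_in_rot_units) simp_all
  moreover have "iota (qmul (axis 2 1) u)
      = (\<chi> i. (if i = 1 \<or> i = 4 then -1 else 1) * u $ Transposition.transpose 1 2 i)"
    by (simp add: quaternion_coords axis_def Transposition.transpose_def)
  ultimately show "(\<chi> i. (if i = 1 \<or> i = 4 then -1 else 1) * u $ Transposition.transpose 1 2 i) \<in> rot_units"
    by simp
qed simp

text \<open>Conjugation by \<open>\<omega>\<close> permutes the coordinates 2, 3, 4 cyclically.\<close>

lemma signed_perm_closed_transpose_23: "signed_perm_closed (Transposition.transpose 2 3)"
proof (rule signed_perm_closedI[where s = "\<lambda>_. 1"])
  fix u assume "u \<in> rot_units"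
  then have "iota (qrot (qcnj (vector [1/2, 1/2, 1/2, 1/2])) u) \<in> rot_units"
    by (intro rot_units_iota rot_units_qrot rot_units_qcnj omega_in_rot_units)
  moreover have "iota (qrot (qcnj (vector [1/2, 1/2, 1/2, 1/2])) u)
      = (\<chi> i. 1 * u $ Transposition.transpose 2 3 i)"
    by (simp add: quaternion_coords qrot_def Transposition.transpose_def field_simps)
  ultimately show "(\<chi> i. 1 * u $ Transposition.transpose 2 3 i) \<in> rot_units"
    by simp
qed simp

lemma signed_perm_closed_transpose_34: "signed_perm_closed (Transposition.transpose 3 4)"
proof (rule signed_perm_closedI[where s = "\<lambda>_. 1"])
  fix u assume "u \<in> rot_units"
  then have "iota u \<in> rot_units"
    by (rule rot_units_iota)
  moreover have "iota u = (\<chi> i. 1 * u $ Transposition.transpose 3 4 i)"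
    by (simp add: quaternion_coords Transposition.transpose_def)
  ultimately show "(\<chi> i. 1 * u $ Transposition.transpose 3 4 i) \<in> rot_units"
    by simp
qed simp

lemma signed_perm_closed_transpose: "signed_perm_closed (Transposition.transpose a b)"
proof -
  have conj: "Transposition.transpose (1::4) 3 = Transposition.transpose 2 3 \<circ> Transposition.transpose 1 2 \<circ> Transposition.transpose 2 3"
    "Transposition.transpose (2::4) 4 = Transposition.transpose 3 4 \<circ> Transposition.transpose 2 3 \<circ> Transposition.transpose 3 4"
    "Transposition.transpose (1::4) 4 = Transposition.transpose 3 4 \<circ> Transposition.transpose 1 3 \<circ> Transposition.transpose 3 4"
    by (simp_all add: fun_eq_iff forall_4 Transposition.transpose_def)
  have "signed_perm_closed (Transposition.transpose 1 3)" "signed_perm_closed (Transposition.transpose 2 4)"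
    "signed_perm_closed (Transposition.transpose 1 4)"
    unfolding conj
    by (intro signed_perm_closed_comp signed_perm_closed_transpose_12 signed_perm_closed_transpose_23
        signed_perm_closed_transpose_34)+
  with signed_perm_closed_transpose_12 signed_perm_closed_transpose_23 signed_perm_closed_transpose_34
    signed_perm_closed_id
  show ?thesis
    using exhaust_4[of a] exhaust_4[of b] by (auto simp: transpose_commute)
qed

lemma signed_perm_closed_permutes:
  assumes "p permutes UNIV"
  shows "signed_perm_closed p"
  using assms finite_class.finite_UNIV
proof (induction rule: permutes_induct)
  case id
  show ?case by (rule signed_perm_closed_id)
next
  case (swap a b p)
  then show ?case by (intro signed_perm_closed_comp signed_perm_closed_transpose)
qed

lemma rot_units_signed_perm:
  assumes "u \<in> rot_units" and "p permutes UNIV" and "\<forall>i. s i \<in> {-1, 1}"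
  shows "(\<chi> i. s i * u $ p i) \<in> rot_units"
  using signed_perm_closed_permutes[OF assms(2)] assms(1,3) by (simp add: signed_perm_closed_def)

lemma Roots_subset_rot_units: "Roots \<subseteq> rot_units"
proof
  fix a assume "a \<in> Roots"
  then obtain t t' where gp: "golden_pair t t'" and a: "a \<in> Delta t t'"
    using Roots_cases by blast
  from a show "a \<in> rot_units"
  proof (cases rule: Delta_cases)
    case (axis i s)
    have "a = (\<chi> j. s * qone $ Transposition.transpose 1 i j)"
      by (auto simp: axis vec_eq_iff axis_def Transposition.transpose_def)
    then show ?thesis
      using axis(1) rot_units_signed_perm[OF rot_units_one permutes_swap_id, of 1 i "\<lambda>_. s"] by simp
  next
    case (half s1 s2 s3 s4)
    then show ?thesis
      using rot_units_signs_vector[OF omega_in_rot_units half(1-4)] by simp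
  next
    case (golden s1 s2 s3 p)
    define sg :: "real^4" where "sg = vector [1, s1, s2, s3]"
    have "a = (\<chi> i. sg $ p i * (vector [0, 1/2, t'/2, t/2] :: real^4) $ p i)"
    proof -
      have "(vector [0, s1/2, s2*t'/2, s3*t/2] :: real^4) $ j = sg $ j * vector [0, 1/2, t'/2, t/2] $ j" for j
        using exhaust_4[of j] by (auto simp: sg_def)
      then show ?thesis
        by (simp add: golden(5))
    qed
    moreover have "\<forall>j. sg $ j \<in> {-1, 1}"
      using golden(1-3) by (simp add: sg_def forall_4)
    ultimately show ?thesis
      using rot_units_signed_perm[OF golden_root_in_rot_units[OF gp] golden(4), of "\<lambda>i. sg $ p i"] by simp
  qed
qed

lemma refl_map_comp_qmul:
  assumes a: "a \<bullet> a = 1" and w: "w \<bullet> w = 1"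
  shows "refl_map a \<circ> qmul w = qmul (- qmul (qmul a (qcnj w)) a) \<circ> (qrot (qmul (qcnj a) w) \<circ> qcnj)"
proof (rule ext)
  fix x
  have "(qmul (- qmul (qmul a (qcnj w)) a) \<circ> (qrot (qmul (qcnj a) w) \<circ> qcnj)) x
     = - qmul (qmul (qmul (qmul (qmul (qmul (qmul a (qcnj w)) a) (qcnj a)) w) (qcnj x)) (qcnj w)) a"
    by (simp add: qrot_def qcnj_qmul qmul_assoc)
  also have "\<dots> = - qmul (qmul (qmul a (qcnj x)) (qcnj w)) a"
    using a w by (simp add: qmul_qcnj_cancel)
  also have "\<dots> = (refl_map a \<circ> qmul w) x"
    by (simp add: refl_map_qmul[OF a] qcnj_qmul qmul_assoc)
  finally show "(refl_map a \<circ> qmul w) x = (qmul (- qmul (qmul a (qcnj w)) a) \<circ> (qrot (qmul (qcnj a) w) \<circ> qcnj)) x"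
    by simp
qed

lemma iota_comp_qmul:
  assumes "w \<bullet> w = 1"
  shows "iota \<circ> qmul w = qmul (iota w) \<circ> (qrot (qcnj (iota w)) \<circ> iota)"
proof (rule ext)
  fix x
  have "iota w \<bullet> iota w = 1"
    using assms by (simp add: inner_iota)
  have "qmul (iota w) (qrot (qcnj (iota w)) (iota x))
      = qmul (qmul (qmul (iota w) (qcnj (iota w))) (iota x)) (iota w)"
    by (simp add: qrot_def qmul_assoc)
  also have "\<dots> = qmul (iota x) (iota w)"
    using \<open>iota w \<bullet> iota w = 1\<close> by (simp add: qmul_qcnj_right)
  finally have "qmul (iota w) (qrot (qcnj (iota w)) (iota x)) = qmul (iota x) (iota w)" .
  then show "(iota \<circ> qmul w) x = (qmul (iota w) \<circ> (qrot (qcnj (iota w)) \<circ> iota)) x"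
    by (simp add: iota_qmul)
qed

lemma Hinf_iota_decomposition:
  assumes "g \<in> gen_group (Hinf \<union> {iota})"
  shows "\<exists>w \<in> rot_units. \<exists>k \<in> Hinf3_iota. g = qmul w \<circ> k"
proof -
  have "g \<in> gen_group (refl_map ` Roots \<union> {iota})"
    using assms gen_group_gen_group_Un unfolding Hinf_def by blast
  moreover have "\<forall>s \<in> refl_map ` Roots \<union> {iota}. s \<circ> s = id"
    using Roots_subset_rot_units by (auto simp: rot_units_def refl_map_refl_map fun_eq_iff)
  ultimately show ?thesis
  proof (induction g rule: gen_group_involutions_induct)
    case id
    have "id = qmul qone \<circ> id"
      by (simp add: fun_eq_iff)
    then show ?case
      using rot_units_one gen_id by blast
  next
    case (step s m)
    then obtain w k where w: "w \<in> rot_units" and k: "k \<in> Hinf3_iota" and m: "m = qmul w \<circ> k"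
      by blast
    from step(1) show ?case
    proof
      assume "s \<in> refl_map ` Roots"
      then obtain a where a: "a \<in> Roots" and s: "s = refl_map a"
        by blast
      have aw: "a \<in> rot_units"
        using a Roots_subset_rot_units by blast
      let ?w = "- qmul (qmul a (qcnj w)) a" and ?k = "(qrot (qmul (qcnj a) w) \<circ> qcnj) \<circ> k"
      have "s \<circ> m = (refl_map a \<circ> qmul w) \<circ> k"
        by (simp add: s m comp_assoc)
      also have "\<dots> = qmul ?w \<circ> ?k"
        unfolding refl_map_comp_qmul[OF rot_units_unit[OF aw] rot_units_unit[OF w]]
        by (simp add: comp_assoc)
      finally have "s \<circ> m = qmul ?w \<circ> ?k" .
      moreover have "?w \<in> rot_units"
        by (intro rot_units_uminus rot_units_qmul rot_units_qcnj aw w)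
      moreover have "qmul (qcnj a) w \<in> rot_units"
        by (intro rot_units_qmul rot_units_qcnj aw w)
      then have "?k \<in> Hinf3_iota"
        by (intro gen_comp qcnj_in_Hinf3_iota k) (simp add: rot_units_def)
      ultimately show ?thesis
        by blast
    next
      assume "s \<in> {iota}"
      then have s: "s = iota"
        by simp
      have "iota w \<in> rot_units"
        using w by (rule rot_units_iota)
      then have "qrot (qcnj (iota w)) \<circ> iota \<circ> k \<in> Hinf3_iota"
        using rot_units_qcnj by (intro gen_comp iota_in_Hinf3_iota k) (simp add: rot_units_def)
      moreover have "s \<circ> m = qmul (iota w) \<circ> (qrot (qcnj (iota w)) \<circ> iota \<circ> k)"
        unfolding s m comp_assoc[symmetric] iota_comp_qmul[OF rot_units_unit[OF w]] by (simp add: comp_assoc)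
      ultimately show ?thesis
        using \<open>iota w \<in> rot_units\<close> by blast
    qed
  qed
qed

lemma Hinf3_iota_fixes_qone:
  assumes "k \<in> Hinf3_iota"
  shows "k qone = qone"
proof -
  have "bij f \<and> f qone = qone" if "f \<in> Hinf3" for f
    using that unfolding Hinf3_def
  proof (rule gen_group_fixes[rotated])
    fix s assume "s \<in> refl_map ` Roots3"
    then obtain a where a: "a \<in> Roots3" and s: "s = refl_map a"
      by blast
    have "a \<bullet> a = 1" "a $ 1 = 0"
      using Roots3D[OF a] Roots_subset_rot_units by (auto simp: rot_units_def)
    then have "bij s"
      using o_bij[of s s] by (simp add: s fun_eq_iff refl_map_refl_map)
    moreover have "s qone = qone"
      using \<open>a $ 1 = 0\<close> by (simp add: s refl_map_def inner_vec_def sum_4)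
    ultimately show "bij s \<and> s qone = qone" ..
  qed
  moreover have "bij iota"
    by (rule o_bij[of iota]) (simp_all add: fun_eq_iff)
  ultimately have "bij s \<and> s qone = qone" if "s \<in> Hinf3 \<union> {iota}" for s
    using that by auto
  then show ?thesis
    using gen_group_fixes[OF _ assms] by blast
qed

lemma Hinf3_iota_subset_Hinf_iota: "Hinf3_iota \<subseteq> gen_group (Hinf \<union> {iota})"
proof -
  have "Hinf3 \<subseteq> Hinf"
    unfolding Hinf_def Hinf3_def by (rule gen_group_mono) blast
  then show ?thesis
    by (intro gen_group_mono) blast
qed

theorem mainTheorem12:
  shows "{g \<in> gen_group (Hinf \<union> {iota}). g (axis 1 1) = axis 1 1}
         = gen_group (Hinf3 \<union> {iota})"
proof (intro equalityI subsetI)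
  fix g assume "g \<in> {g \<in> gen_group (Hinf \<union> {iota}). g (axis 1 1) = axis 1 1}"
  then have g: "g \<in> gen_group (Hinf \<union> {iota})" and g1: "g qone = qone"
    by auto
  obtain w k where k: "k \<in> Hinf3_iota" and gwk: "g = qmul w \<circ> k"
    using Hinf_iota_decomposition[OF g] by blast
  have "w = qone"
    using g1 Hinf3_iota_fixes_qone[OF k] by (simp add: gwk)
  then show "g \<in> Hinf3_iota"
    using k by (simp add: gwk comp_def)
next
  fix g assume "g \<in> Hinf3_iota"
  then show "g \<in> {g \<in> gen_group (Hinf \<union> {iota}). g (axis 1 1) = axis 1 1}"
    using Hinf3_iota_subset_Hinf_iota Hinf3_iota_fixes_qone by blast
qed

end
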